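(* Let $H_1$ and $H_2$ be vertex-disjoint connected graphs with $u\in V(H_1)$, $w\in V(H_2)$, where $H_2$ has at least two vertices. Let $k\geqslant 1$ and let $G$ be the graph obtained from $H_1\cup H_2$ by adding the edge $uw$, a new vertex $v$ adjacent to $u$, and $k$ new vertices $v_1,\ldots,v_k$ each adjacent only to $v$. Let $W=N_G(v)\setminus\{u\}=\{v_1,\ldots,v_k\}$ and $$G[v\rightarrow w;2]=G-\{vz: z\in W\}+\{wz: z\in W\}.$$ If $\varepsilon_{H_2}(w)\geqslant\varepsilon_{H_1}(u)$, then $\xi^{ee}(G)<\xi^{ee}(G[v\rightarrow w;2])$.
   Context: All graphs are finite, simple and connected. For a vertex $x$ of a connected graph $G$, $\varepsilon_G(x)$ is the eccentricity of $x$ and $d_G(x)$ its degree; $N_G(v)$ is the neighbourhood of $v$. The total reciprocal edge-eccentricity of $G$ is $\xi^{ee}(G)=\sum_{uv\in E(G)}\left(\frac{1}{\varepsilon_G(u)}+\frac{1}{\varepsilon_G(v)}\right)=\sum_{x\in V(G)}\frac{d_G(x)}{\varepsilon_G(x)}$. *)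

theory Defs
  imports Complex_Main
begin

definition simple_graph :: "'a set \<Rightarrow> 'a set set \<Rightarrow> bool" where
  "simple_graph V E \<longleftrightarrow> finite V \<and>
     (\<forall>e\<in>E. \<exists>x y. x \<noteq> y \<and> x \<in> V \<and> y \<in> V \<and> e = {x, y})"

fun walk_le :: "'a set set \<Rightarrow> 'a \<Rightarrow> 'a \<Rightarrow> nat \<Rightarrow> bool" where
  "walk_le E x y 0 \<longleftrightarrow> x = y"
| "walk_le E x y (Suc n) \<longleftrightarrow> walk_le E x y n \<or> (\<exists>z. {x, z} \<in> E \<and> walk_le E z y n)"

definition connected_graph :: "'a set \<Rightarrow> 'a set set \<Rightarrow> bool" where
  "connected_graph V E \<longleftrightarrow> simple_graph V E \<and> V \<noteq> {} \<and>
     (\<forall>x\<in>V. \<forall>y\<in>V. \<exists>n. walk_le E x y n)"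

definition gdist :: "'a set set \<Rightarrow> 'a \<Rightarrow> 'a \<Rightarrow> nat" where
  "gdist E x y = (LEAST n. walk_le E x y n)"

definition ecc :: "'a set \<Rightarrow> 'a set set \<Rightarrow> 'a \<Rightarrow> nat" where
  "ecc V E x = Max (gdist E x ` V)"

definition neighbours :: "'a set \<Rightarrow> 'a set set \<Rightarrow> 'a \<Rightarrow> 'a set" where
  "neighbours V E x = {y \<in> V. {x, y} \<in> E}"

definition degree :: "'a set \<Rightarrow> 'a set set \<Rightarrow> 'a \<Rightarrow> nat" where
  "degree V E x = card (neighbours V E x)"

definition xi_ee :: "'a set \<Rightarrow> 'a set set \<Rightarrow> real" where
  "xi_ee V E = (\<Sum>x\<in>V. real (degree V E x) / real (ecc V E x))"

end

theory Submission
  imports Defs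
begin

text \<open>Moving the k pendant vertices from v to w changes only two degrees: v loses k and w
  gains k. No eccentricity grows. With b the eccentricity of w in H2 (at least that of u in H1),
  after the move every vertex lies within b + 1 of w, whereas before the move v is at distance at
  least b + 2 from a vertex of H2 farthest from w. So the eccentricity of w afterwards is smaller
  than that of v before, and the index increases by at least k/ecc'(w) - k/ecc(v) > 0.\<close>

lemma walk_le_mono: "walk_le E x y m \<Longrightarrow> m \<le> n \<Longrightarrow> walk_le E x y n"
  by (induction n) (auto simp: le_Suc_eq)

lemma walk_le_edge: "{x, y} \<in> E \<Longrightarrow> walk_le E x y 1"
  by (simp add: One_nat_def)

lemma walk_le_trans: "walk_le E x y m \<Longrightarrow> walk_le E y z n \<Longrightarrow> walk_le E x z (m + n)"
proof (induction m arbitrary: x)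
  case 0
  then show ?case by simp
next
  case (Suc m)
  then consider "walk_le E x y m" | a where "{x, a} \<in> E" "walk_le E a y m"
    by auto
  then show ?case
  proof cases
    case 1
    then have "walk_le E x z (m + n)" using Suc.IH Suc.prems(2) by blast
    then show ?thesis by (rule walk_le_mono) simp
  next
    case 2
    then show ?thesis using Suc.IH Suc.prems(2) by auto
  qed
qed

lemma walk_le_map:
  assumes "\<And>a b. {a, b} \<in> E \<Longrightarrow> f a = f b \<or> {f a, f b} \<in> F"
  shows "walk_le E x y n \<Longrightarrow> walk_le F (f x) (f y) n"
proof (induction n arbitrary: x)
  case 0
  then show ?case by simp
next
  case (Suc n)
  then consider "walk_le E x y n" | a where "{x, a} \<in> E" "walk_le E a y n"
    by auto
  then show ?case
  proof cases
    case 1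
    then show ?thesis using Suc.IH by simp
  next
    case 2
    then have "walk_le F (f a) (f y) n" using Suc.IH by blast
    from assms[OF \<open>{x, a} \<in> E\<close>] show ?thesis
    proof
      assume "f x = f a"
      then show ?thesis using \<open>walk_le F (f a) (f y) n\<close> by simp
    next
      assume "{f x, f a} \<in> F"
      then show ?thesis using \<open>walk_le F (f a) (f y) n\<close> by auto
    qed
  qed
qed

lemma walk_le_sym: "walk_le E x y n \<Longrightarrow> walk_le E y x n"
proof (induction n arbitrary: x)
  case 0
  then show ?case by simp
next
  case (Suc n)
  then consider "walk_le E x y n" | a where "{x, a} \<in> E" "walk_le E a y n"
    by auto
  then show ?case
  proof cases
    case 1
    then show ?thesis using Suc.IH by simp
  next
    case 2
    then have "walk_le E y a n" using Suc.IH by blast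
    moreover have "walk_le E a x 1" using \<open>{x, a} \<in> E\<close> by (simp add: insert_commute)
    ultimately show ?thesis using walk_le_trans by fastforce
  qed
qed

lemma walk_le_subset: "E \<subseteq> F \<Longrightarrow> walk_le E x y n \<Longrightarrow> walk_le F x y n"
  by (induction n arbitrary: x) auto

lemma walk_le_cut_vertex:
  assumes cut: "\<And>a b. {a, b} \<in> E \<Longrightarrow> a \<in> A \<Longrightarrow> b \<in> A \<or> b = c"
    and "c \<notin> A" "y \<notin> A"
  shows "walk_le E x y n \<Longrightarrow> x \<in> A \<or> x = c \<Longrightarrow>
           \<exists>m\<le>n. walk_le E x c m \<and> walk_le E c y (n - m)"
proof (induction n arbitrary: x)
  case 0
  then show ?case using \<open>y \<notin> A\<close> by auto
next
  case (Suc n)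
  show ?case
  proof (cases "x = c")
    case True
    then show ?thesis using Suc.prems by (intro exI[of _ 0]) auto
  next
    case False
    with Suc.prems have "x \<in> A" by auto
    from Suc.prems consider "walk_le E x y n" | a where "{x, a} \<in> E" "walk_le E a y n"
      by auto
    then show ?thesis
    proof cases
      case 1
      then obtain m where "m \<le> n" "walk_le E x c m" "walk_le E c y (n - m)"
        using Suc.IH \<open>x \<in> A\<close> by blast
      moreover have "walk_le E c y (Suc n - m)"
        using walk_le_mono[OF \<open>walk_le E c y (n - m)\<close>] by simp
      ultimately show ?thesis by (intro exI[of _ m]) auto
    next
      case 2
      then have "a \<in> A \<or> a = c" using cut \<open>x \<in> A\<close> by blast
      then obtain m where "m \<le> n" "walk_le E a c m" "walk_le E c y (n - m)"
        using Suc.IH 2 by blast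
      moreover have "walk_le E x c (Suc m)" using 2 \<open>walk_le E a c m\<close> by auto
      ultimately show ?thesis by (intro exI[of _ "Suc m"]) auto
    qed
  qed
qed

definition reachable :: "'a set set \<Rightarrow> 'a \<Rightarrow> 'a \<Rightarrow> bool" where
  "reachable E x y \<longleftrightarrow> (\<exists>n. walk_le E x y n)"

lemma reachable_edge: "{x, y} \<in> E \<Longrightarrow> reachable E x y"
  unfolding reachable_def using walk_le_edge by metis

lemma reachable_trans: "reachable E x y \<Longrightarrow> reachable E y z \<Longrightarrow> reachable E x z"
  unfolding reachable_def using walk_le_trans by metis

lemma reachable_sym: "reachable E x y \<Longrightarrow> reachable E y x"
  unfolding reachable_def using walk_le_sym by metis

lemma reachable_subset: "E \<subseteq> F \<Longrightarrow> reachable E x y \<Longrightarrow> reachable F x y"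
  unfolding reachable_def using walk_le_subset by metis

lemma connected_graph_reachable:
  "connected_graph V E \<Longrightarrow> x \<in> V \<Longrightarrow> y \<in> V \<Longrightarrow> reachable E x y"
  unfolding connected_graph_def reachable_def by blast

lemma gdist_le_walk: "walk_le E x y n \<Longrightarrow> gdist E x y \<le> n"
  unfolding gdist_def by (rule Least_le)

lemma walk_le_gdist: "reachable E x y \<Longrightarrow> walk_le E x y (gdist E x y)"
  unfolding gdist_def reachable_def by (metis LeastI)

lemma gdist_pos: "reachable E x y \<Longrightarrow> x \<noteq> y \<Longrightarrow> 0 < gdist E x y"
  using walk_le_gdist[of E x y] by (cases "gdist E x y") auto

lemma gdist_edge_le: "{x, y} \<in> E \<Longrightarrow> gdist E x y \<le> 1"
  using gdist_le_walk[OF walk_le_edge] .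

lemma gdist_triangle:
  "reachable E x y \<Longrightarrow> reachable E y z \<Longrightarrow> gdist E x z \<le> gdist E x y + gdist E y z"
  using gdist_le_walk walk_le_trans walk_le_gdist by metis

lemma gdist_map_le:
  assumes "\<And>a b. {a, b} \<in> E \<Longrightarrow> f a = f b \<or> {f a, f b} \<in> F" "reachable E x y"
  shows "gdist F (f x) (f y) \<le> gdist E x y"
  using gdist_le_walk walk_le_map[OF assms(1) walk_le_gdist[OF assms(2)]] .

lemma gdist_subset_le: "E \<subseteq> F \<Longrightarrow> reachable E x y \<Longrightarrow> gdist F x y \<le> gdist E x y"
  using gdist_le_walk walk_le_subset walk_le_gdist by metis

lemma gdist_cut_vertex:
  assumes "\<And>a b. {a, b} \<in> E \<Longrightarrow> a \<in> A \<Longrightarrow> b \<in> A \<or> b = c"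
    and "c \<notin> A" "y \<notin> A" "x \<in> A \<or> x = c" "reachable E x y"
  shows "gdist E x c + gdist E c y \<le> gdist E x y"
proof -
  have "\<exists>m\<le>gdist E x y. walk_le E x c m \<and> walk_le E c y (gdist E x y - m)"
    by (rule walk_le_cut_vertex[where A = A]) (use assms walk_le_gdist in auto)
  then obtain m where "m \<le> gdist E x y" "walk_le E x c m" "walk_le E c y (gdist E x y - m)"
    by blast
  then show ?thesis using gdist_le_walk[of E x c m] gdist_le_walk[of E c y] by fastforce
qed

lemma gdist_le_ecc: "finite V \<Longrightarrow> y \<in> V \<Longrightarrow> gdist E x y \<le> ecc V E x"
  unfolding ecc_def by simp

lemma ecc_le: "finite V \<Longrightarrow> V \<noteq> {} \<Longrightarrow> (\<And>y. y \<in> V \<Longrightarrow> gdist E x y \<le> B) \<Longrightarrow> ecc V E x \<le> B"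
  unfolding ecc_def by simp

lemma ecc_attained: "finite V \<Longrightarrow> V \<noteq> {} \<Longrightarrow> \<exists>y\<in>V. gdist E x y = ecc V E x"
  unfolding ecc_def by (metis (mono_tags, lifting) Max_in finite_imageI image_iff image_is_empty)

lemma ecc_pos:
  "finite V \<Longrightarrow> y \<in> V \<Longrightarrow> x \<noteq> y \<Longrightarrow> reachable E x y \<Longrightarrow> 0 < ecc V E x"
  using gdist_pos[of E x y] gdist_le_ecc[of V y E x] by linarith

lemma simple_graph_edge:
  assumes "simple_graph V E" "{a, b} \<in> E"
  shows "a \<in> V" "b \<in> V" "a \<noteq> b"
proof -
  obtain x y where "x \<noteq> y" "x \<in> V" "y \<in> V" "{a, b} = {x, y}"
    using assms unfolding simple_graph_def by blast
  moreover from this(4) have "a = x \<and> b = y \<or> a = y \<and> b = x"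
    by (simp add: doubleton_eq_iff)
  ultimately show "a \<in> V" "b \<in> V" "a \<noteq> b" by auto
qed

lemma obtain_other_element:
  assumes "2 \<le> card A"
  obtains y where "y \<in> A" "y \<noteq> x"
proof -
  have "\<not> A \<subseteq> {x}"
    using card_mono[of "{x}" A] assms by auto
  then show ?thesis using that by blast
qed

lemma sum_less_two_points:
  fixes f g :: "'a \<Rightarrow> 'b::ordered_cancel_comm_monoid_add"
  assumes "finite A" "a \<in> A" "b \<in> A" "a \<noteq> b"
    and "\<And>x. x \<in> A - {a, b} \<Longrightarrow> f x \<le> g x" "f a + f b < g a + g b"
  shows "sum f A < sum g A"
proof -
  have split: "sum h A = h a + h b + sum h (A - {a, b})" for h :: "'a \<Rightarrow> 'b"
    using assms(1-4) sum.subset_diff[of "{a, b}" A h] by (simp add: add.commute)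
  show ?thesis
    unfolding split using add_less_le_mono[OF assms(6) sum_mono[OF assms(5)]] .
qed

lemma ratio_transfer_less:
  fixes dv dw k ev ew ev' ew' :: real
  assumes "0 \<le> dv" "0 \<le> dw" "0 < k"
    and "0 < ev'" "ev' \<le> ev" "0 < ew'" "ew' \<le> ew" "ew' < ev"
  shows "(dv + k) / ev + dw / ew < dv / ev' + (dw + k) / ew'"
proof -
  have "dv / ev \<le> dv / ev'" "dw / ew \<le> dw / ew'"
    using assms by (simp_all add: frac_le)
  moreover have "k / ev < k / ew'"
    using assms by (simp add: divide_strict_left_mono)
  ultimately show ?thesis by (simp add: add_divide_distrib)
qed

text \<open>The paper's graph G and its transform G[v \<rightarrow> w; 2] differ only in the centre c at which
  the pendant vertices W hang: they are edges v and edges w below.\<close>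

locale pendant_transfer =
  fixes V1 V2 W :: "'a set" and E1 E2 :: "'a set set" and u w v :: 'a
  assumes H1: "connected_graph V1 E1"
    and H2: "connected_graph V2 E2"
    and disjoint: "V1 \<inter> V2 = {}"
    and u: "u \<in> V1" and w: "w \<in> V2"
    and v_new: "v \<notin> V1 \<union> V2"
    and W_new: "W \<inter> (V1 \<union> V2 \<union> {v}) = {}"
    and finite_W: "finite W"
begin

definition verts :: "'a set" where
  "verts = V1 \<union> V2 \<union> {v} \<union> W"

definition core_edges :: "'a set set" where
  "core_edges = E1 \<union> E2 \<union> {{u, w}, {u, v}}"

definition edges :: "'a \<Rightarrow> 'a set set" where
  "edges c = core_edges \<union> {{c, z} | z. z \<in> W}"

lemma distinct_vertices [simp]:
  "u \<noteq> w" "u \<noteq> v" "v \<noteq> w" "w \<noteq> u" "v \<noteq> u" "w \<noteq> v"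
  "u \<notin> V2" "w \<notin> V1" "v \<notin> V1" "v \<notin> V2" "u \<notin> W" "v \<notin> W" "w \<notin> W"
  using u w v_new W_new disjoint by auto

lemma disjoint_parts [simp]:
  "x \<in> V1 \<Longrightarrow> x \<notin> V2" "z \<in> W \<Longrightarrow> z \<notin> V1" "z \<in> W \<Longrightarrow> z \<notin> V2"
  using W_new disjoint by auto

lemma finite_verts: "finite verts"
  using H1 H2 finite_W by (simp add: verts_def connected_graph_def simple_graph_def)

lemma verts_members [simp]: "u \<in> verts" "v \<in> verts" "w \<in> verts"
  using u w by (auto simp: verts_def)

lemma core_edge_cases:
  assumes "{a, b} \<in> core_edges"
  shows "a \<in> V1 \<and> b \<in> V1 \<and> {a, b} \<in> E1 \<or> a \<in> V2 \<and> b \<in> V2 \<and> {a, b} \<in> E2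
    \<or> a = u \<and> b = w \<or> a = w \<and> b = u \<or> a = u \<and> b = v \<or> a = v \<and> b = u"
proof -
  have "simple_graph V1 E1" "simple_graph V2 E2"
    using H1 H2 by (auto simp: connected_graph_def)
  then show ?thesis
    using assms simple_graph_edge[of V1 E1 a b] simple_graph_edge[of V2 E2 a b]
    by (auto simp: core_edges_def doubleton_eq_iff)
qed

lemma edge_cases:
  assumes "{a, b} \<in> edges c"
  shows "{a, b} \<in> core_edges \<or> a = c \<and> b \<in> W \<or> a \<in> W \<and> b = c"
  using assms by (auto simp: edges_def doubleton_eq_iff)

lemma core_edge_avoids_W: "{a, b} \<in> core_edges \<Longrightarrow> a \<notin> W"
  using core_edge_cases[of a b] by auto

lemma edges_contain:
  "E1 \<subseteq> edges c" "E2 \<subseteq> edges c" "core_edges \<subseteq> edges c"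
  "{u, w} \<in> edges c" "{w, u} \<in> edges c" "{u, v} \<in> edges c" "{v, u} \<in> edges c"
  "z \<in> W \<Longrightarrow> {c, z} \<in> edges c" "z \<in> W \<Longrightarrow> {z, c} \<in> edges c"
  by (auto simp: edges_def core_edges_def insert_commute)

lemma reachable_edges:
  assumes c: "c \<in> {v, w}" and "x \<in> verts" "y \<in> verts"
  shows "reachable (edges c) x y"
proof -
  have "{c, u} \<in> edges c"
    using c edges_contain(5,7) by auto
  then have c_u: "reachable (edges c) c u"
    by (rule reachable_edge)
  have to_u: "reachable (edges c) x u" if x: "x \<in> verts" for x
  proof -
    consider "x \<in> V1" | "x \<in> V2" | "x = v" | "x \<in> W"
      using x by (auto simp: verts_def)
    then show ?thesis
    proof cases
      case 1
      then show ?thesis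
        using reachable_subset[OF edges_contain(1) connected_graph_reachable[OF H1 _ u]] by simp
    next
      case 2
      then have "reachable (edges c) x w"
        using reachable_subset[OF edges_contain(2) connected_graph_reachable[OF H2 _ w]] by simp
      then show ?thesis
        using reachable_trans reachable_edge[OF edges_contain(5)] by metis
    next
      case 3
      then show ?thesis
        using reachable_edge[OF edges_contain(7)] by simp
    next
      case 4
      then show ?thesis
        using reachable_trans[OF reachable_edge[OF edges_contain(9)] c_u] by simp
    qed
  qed
  show ?thesis
    using reachable_trans[OF to_u reachable_sym[OF to_u]] assms(2,3) .
qed

lemma gdist_H2_le:
  assumes "c \<in> {v, w}" "x \<in> V2" "y \<in> V2"
  shows "gdist E2 x y \<le> gdist (edges c) x y"
proof -
  define retract where "retract t = (if t \<in> V2 then t else w)" for t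
  have "retract a = retract b \<or> {retract a, retract b} \<in> E2" if "{a, b} \<in> edges c" for a b
    using edge_cases[OF that] core_edge_cases[of a b] assms(1) w
    by (auto simp: retract_def)
  moreover have "reachable (edges c) x y"
    using reachable_edges assms by (auto simp: verts_def)
  ultimately show ?thesis
    using gdist_map_le[of "edges c" retract E2 x y] assms(2,3) by (simp add: retract_def)
qed

lemma ecc_pendant_before:
  assumes z: "z \<in> insert v W"
  shows "ecc V2 E2 w + 2 \<le> ecc verts (edges v) z"
proof -
  have "V2 \<noteq> {}" "finite V2"
    using w H2 by (auto simp: connected_graph_def simple_graph_def)
  then obtain y where y: "y \<in> V2" "gdist E2 w y = ecc V2 E2 w"
    using ecc_attained[of V2 E2 w] by auto
  have zV: "z \<in> verts" and yV: "y \<in> verts"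
    using z y by (auto simp: verts_def)
  have "z \<noteq> u"
    using z by auto
  have reach: "reachable (edges v) a b" if "a \<in> verts" "b \<in> verts" for a b
    using reachable_edges[of v a b] that by simp
  have "gdist (edges v) z u + gdist (edges v) u w \<le> gdist (edges v) z w"
  proof (rule gdist_cut_vertex[where A = "insert v W"])
    show "b \<in> insert v W \<or> b = u" if "{a, b} \<in> edges v" "a \<in> insert v W" for a b
      using edge_cases[OF that(1)] core_edge_cases[of a b] that(2) by auto
  qed (use z reach[OF zV] in simp_all)
  moreover have "gdist (edges v) z w + gdist (edges v) w y \<le> gdist (edges v) z y"
  proof (rule gdist_cut_vertex[where A = "V1 \<union> insert v W"])
    show "b \<in> V1 \<union> insert v W \<or> b = w" if "{a, b} \<in> edges v" "a \<in> V1 \<union> insert v W" for a b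
      using edge_cases[OF that(1)] core_edge_cases[of a b] that(2) u by auto
  qed (use z y reach[OF zV yV] in auto)
  moreover have "0 < gdist (edges v) z u"
    using gdist_pos[OF reach[OF zV verts_members(1)]] \<open>z \<noteq> u\<close> by simp
  moreover have "0 < gdist (edges v) u w"
    using gdist_pos[OF reach[OF verts_members(1,3)]] by simp
  moreover have "ecc V2 E2 w \<le> gdist (edges v) w y"
    using gdist_H2_le[of v w y] y w by simp
  moreover have "gdist (edges v) z y \<le> ecc verts (edges v) z"
    using gdist_le_ecc[OF finite_verts yV] .
  ultimately show ?thesis by linarith
qed

lemma gdist_after_le_before:
  assumes "x \<in> verts" "y \<in> verts" "x \<notin> W" "y \<notin> W"
  shows "gdist (edges w) x y \<le> gdist (edges v) x y"
proof -
  define collapse where "collapse t = (if t \<in> W then v else t)" for t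
  have "collapse a = collapse b \<or> {collapse a, collapse b} \<in> edges w"
    if "{a, b} \<in> edges v" for a b
    using edge_cases[OF that] core_edge_avoids_W[of a b] core_edge_avoids_W[of b a]
      edges_contain(3)
    by (auto simp: collapse_def insert_commute)
  then show ?thesis
    using gdist_map_le[of "edges v" collapse "edges w" x y] reachable_edges[of v x y] assms
    by (simp add: collapse_def)
qed

lemma ecc_after_at_w:
  assumes "2 \<le> card V2" and ecc_le_ecc: "ecc V1 E1 u \<le> ecc V2 E2 w"
  shows "ecc verts (edges w) w \<le> ecc V2 E2 w + 1"
proof (rule ecc_le[OF finite_verts])
  have fin: "finite V1" "finite V2"
    using H1 H2 by (auto simp: connected_graph_def simple_graph_def)
  have reach: "reachable (edges w) a b" if "a \<in> verts" "b \<in> verts" for a b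
    using reachable_edges[of w a b] that by simp
  have w_u: "gdist (edges w) w u \<le> 1"
    using gdist_edge_le[OF edges_contain(5)] .
  obtain t where "t \<in> V2" "t \<noteq> w"
    using obtain_other_element[OF assms(1)] .
  then have "0 < ecc V2 E2 w"
    using ecc_pos[OF fin(2)] connected_graph_reachable[OF H2 w] by metis
  fix y
  assume y: "y \<in> verts"
  then consider "y \<in> W" | "y \<in> V2" | "y \<in> V1" | "y = v"
    by (auto simp: verts_def)
  then show "gdist (edges w) w y \<le> ecc V2 E2 w + 1"
  proof cases
    case 1
    then show ?thesis using gdist_edge_le[OF edges_contain(8)[of y w]] by simp
  next
    case 2
    then have "gdist (edges w) w y \<le> gdist E2 w y"
      using gdist_subset_le[OF edges_contain(2) connected_graph_reachable[OF H2 w]] by simp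
    also have "\<dots> \<le> ecc V2 E2 w"
      using gdist_le_ecc[OF fin(2) 2] .
    finally show ?thesis by simp
  next
    case 3
    then have "gdist (edges w) u y \<le> gdist E1 u y"
      using gdist_subset_le[OF edges_contain(1) connected_graph_reachable[OF H1 u]] by simp
    also have "\<dots> \<le> ecc V1 E1 u"
      using gdist_le_ecc[OF fin(1) 3] .
    finally show ?thesis
      using gdist_triangle[OF reach reach, of w u y] y w_u ecc_le_ecc by simp
  next
    case 4
    have "gdist (edges w) u v \<le> 1"
      using gdist_edge_le[OF edges_contain(6)] .
    then show ?thesis
      using gdist_triangle[OF reach reach, of w u v] w_u \<open>0 < ecc V2 E2 w\<close> 4 by simp
  qed
qed (simp add: verts_def)

text \<open>The vertex w is never farthest from anything in G: W lies beyond w as seen from H2, and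
  V2 - {w} lies beyond w as seen from the rest.\<close>

lemma gdist_w_less_ecc_before:
  assumes "2 \<le> card V2" "W \<noteq> {}" and x: "x \<in> verts"
  shows "gdist (edges v) x w < ecc verts (edges v) x"
proof -
  have reach: "reachable (edges v) a b" if "a \<in> verts" "b \<in> verts" for a b
    using reachable_edges[of v a b] that by simp
  obtain y where y: "y \<in> verts" "y \<noteq> w"
    and beyond: "gdist (edges v) x w + gdist (edges v) w y \<le> gdist (edges v) x y"
  proof (cases "x \<in> V2")
    case True
    obtain z where z: "z \<in> W"
      using assms(2) by auto
    then have zV: "z \<in> verts" by (simp add: verts_def)
    have "gdist (edges v) x w + gdist (edges v) w z \<le> gdist (edges v) x z"
    proof (rule gdist_cut_vertex[where A = "V2 - {w}"])
      show "b \<in> V2 - {w} \<or> b = w" if "{a, b} \<in> edges v" "a \<in> V2 - {w}" for a b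
        using edge_cases[OF that(1)] core_edge_cases[of a b] that(2) by auto
    qed (use True z reach[OF x zV] in auto)
    moreover have "z \<noteq> w"
      using z by auto
    ultimately show ?thesis using that[OF zV] by simp
  next
    case False
    obtain t where t: "t \<in> V2" "t \<noteq> w"
      using obtain_other_element[OF assms(1)] .
    then have tV: "t \<in> verts" by (simp add: verts_def)
    have "gdist (edges v) x w + gdist (edges v) w t \<le> gdist (edges v) x t"
    proof (rule gdist_cut_vertex[where A = "V1 \<union> insert v W"])
      show "b \<in> V1 \<union> insert v W \<or> b = w" if "{a, b} \<in> edges v" "a \<in> V1 \<union> insert v W" for a b
        using edge_cases[OF that(1)] core_edge_cases[of a b] that(2) u by auto
    qed (use False x t reach[OF x tV] in \<open>auto simp: verts_def\<close>)
    then show ?thesis using that[OF tV t(2)] by simp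
  qed
  have "0 < gdist (edges v) w y"
    using gdist_pos[OF reach[OF verts_members(3) y(1)]] y(2) by simp
  moreover have "gdist (edges v) x y \<le> ecc verts (edges v) x"
    using gdist_le_ecc[OF finite_verts y(1)] .
  ultimately show ?thesis using beyond by linarith
qed

lemma ecc_after_le_before:
  assumes "2 \<le> card V2" "W \<noteq> {}" "ecc V1 E1 u \<le> ecc V2 E2 w" and x: "x \<in> verts"
  shows "ecc verts (edges w) x \<le> ecc verts (edges v) x"
proof (rule ecc_le[OF finite_verts])
  fix y
  assume y: "y \<in> verts"
  have reach: "reachable (edges w) a b" if "a \<in> verts" "b \<in> verts" for a b
    using reachable_edges[of w a b] that by simp
  have via_w: "gdist (edges w) x y \<le> gdist (edges w) x w + gdist (edges w) w y"
    using gdist_triangle[OF reach reach] x y by simp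
  show "gdist (edges w) x y \<le> ecc verts (edges v) x"
  proof (cases "x \<in> W")
    case True
    have "gdist (edges w) x w \<le> 1"
      using gdist_edge_le[OF edges_contain(9)[OF True]] .
    moreover have "gdist (edges w) w y \<le> ecc V2 E2 w + 1"
      using gdist_le_ecc[OF finite_verts y] ecc_after_at_w[OF assms(1,3)] by (rule order_trans)
    moreover have "ecc V2 E2 w + 2 \<le> ecc verts (edges v) x"
      using ecc_pendant_before True by simp
    ultimately show ?thesis using via_w by linarith
  next
    case x_not_W: False
    show ?thesis
    proof (cases "y \<in> W")
      case True
      have "gdist (edges w) w y \<le> 1"
        using gdist_edge_le[OF edges_contain(8)[OF True]] .
      moreover have "gdist (edges w) x w \<le> gdist (edges v) x w"
        using gdist_after_le_before x x_not_W by simp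
      moreover have "gdist (edges v) x w < ecc verts (edges v) x"
        using gdist_w_less_ecc_before[OF assms(1,2) x] .
      ultimately show ?thesis using via_w by linarith
    next
      case False
      then show ?thesis
        using gdist_after_le_before[OF x y x_not_W] gdist_le_ecc[OF finite_verts y, of "edges v" x]
        by linarith
    qed
  qed
qed (simp add: verts_def)

lemma neighbours_off_centre:
  assumes "x \<notin> insert c W"
  shows "neighbours verts (edges c) x = neighbours verts core_edges x"
  using assms by (auto simp: neighbours_def edges_def doubleton_eq_iff)

lemma neighbours_centre:
  assumes "c \<notin> W"
  shows "neighbours verts (edges c) c = neighbours verts core_edges c \<union> W"
  using assms W_new by (auto simp: neighbours_def edges_def verts_def doubleton_eq_iff)

lemma degree_off_centre:
  "x \<notin> insert c W \<Longrightarrow> degree verts (edges c) x = degree verts core_edges x"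
  by (simp add: degree_def neighbours_off_centre)

lemma degree_centre:
  assumes "c \<notin> W"
  shows "degree verts (edges c) c = degree verts core_edges c + card W"
proof -
  have "neighbours verts core_edges c \<inter> W = {}"
    using core_edge_avoids_W by (auto simp: neighbours_def insert_commute)
  moreover have "finite (neighbours verts core_edges c)"
    using finite_verts by (simp add: neighbours_def)
  ultimately show ?thesis
    using assms finite_W by (simp add: degree_def neighbours_centre card_Un_disjoint)
qed

lemma degree_pendant:
  assumes "c \<in> verts" "c \<notin> W" "z \<in> W"
  shows "degree verts (edges c) z = 1"
proof -
  have "neighbours verts (edges c) z = {c}"
    using assms core_edge_avoids_W[of z]
    by (auto simp: neighbours_def edges_def doubleton_eq_iff)
  then show ?thesis by (simp add: degree_def)
qed

lemma xi_ee_before_less_after: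
  assumes "2 \<le> card V2" "W \<noteq> {}" "ecc V1 E1 u \<le> ecc V2 E2 w"
  shows "xi_ee verts (edges v) < xi_ee verts (edges w)"
proof -
  define ratio where "ratio E x = real (degree verts E x) / real (ecc verts E x)" for E x
  have ecc_pos_after: "0 < ecc verts (edges w) x" if "x \<in> verts" for x
  proof -
    obtain y where "y \<in> verts" "y \<noteq> x"
      using that verts_members(1,2) distinct_vertices(2) by metis
    then show ?thesis
      using ecc_pos[OF finite_verts] reachable_edges[of w x] that by simp
  qed
  note ecc_mono = ecc_after_le_before[OF assms]
  have "ratio (edges v) x \<le> ratio (edges w) x" if x: "x \<in> verts - {v, w}" for x
  proof -
    have "degree verts (edges v) x = degree verts (edges w) x"
      using x degree_pendant[of v x] degree_pendant[of w x] degree_off_centre[of x v]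
        degree_off_centre[of x w]
      by (cases "x \<in> W") auto
    then show ?thesis
      using ecc_mono[of x] ecc_pos_after[of x] x by (simp add: ratio_def frac_le)
  qed
  moreover have "ratio (edges v) v + ratio (edges v) w < ratio (edges w) v + ratio (edges w) w"
  proof -
    have "ecc verts (edges w) w < ecc verts (edges v) v"
      using ecc_after_at_w[OF assms(1,3)] ecc_pendant_before[of v] by simp
    moreover have "0 < card W"
      using assms(2) finite_W by (simp add: card_gt_0_iff)
    ultimately show ?thesis
      using ratio_transfer_less[of "degree verts core_edges v" "degree verts core_edges w"
          "card W" "ecc verts (edges w) v" "ecc verts (edges v) v"
          "ecc verts (edges w) w" "ecc verts (edges v) w"]
        ecc_mono[of v] ecc_mono[of w] ecc_pos_after[of v] ecc_pos_after[of w]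
      by (simp add: ratio_def degree_centre degree_off_centre)
  qed
  ultimately have "sum (ratio (edges v)) verts < sum (ratio (edges w)) verts"
    by (rule sum_less_two_points[OF finite_verts verts_members(2,3) distinct_vertices(3)])
  then show ?thesis
    by (simp add: xi_ee_def ratio_def)
qed

end

theorem theorem3p5:
  fixes V1 V2 W :: "'a set" and E1 E2 :: "'a set set" and u w v :: 'a and k :: nat
  assumes H1: "connected_graph V1 E1"
    and H2: "connected_graph V2 E2"
    and disj: "V1 \<inter> V2 = {}"
    and u: "u \<in> V1" and w: "w \<in> V2"
    and H2_two: "card V2 \<ge> 2"
    and v_new: "v \<notin> V1 \<union> V2"
    and W_new: "W \<inter> (V1 \<union> V2 \<union> {v}) = {}"
    and W_fin: "finite W" and W_card: "card W = k" and k: "k \<ge> 1"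
    and ecc_ge: "ecc V2 E2 w \<ge> ecc V1 E1 u"
  shows "xi_ee (V1 \<union> V2 \<union> {v} \<union> W)
            (E1 \<union> E2 \<union> {{u, w}, {u, v}} \<union> {{v, z} | z. z \<in> W})
       < xi_ee (V1 \<union> V2 \<union> {v} \<union> W)
            (E1 \<union> E2 \<union> {{u, w}, {u, v}} \<union> {{w, z} | z. z \<in> W})"
proof -
  interpret pendant_transfer V1 V2 W E1 E2 u w v
    using H1 H2 disj u w v_new W_new W_fin by unfold_locales
  have "W \<noteq> {}"
    using W_card k by auto
  then show ?thesis
    using xi_ee_before_less_after[OF H2_two _ ecc_ge]
    unfolding verts_def edges_def core_edges_def by simp
qed

end
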